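(* For all parameters $u,v,w$ with $v\neq0$ and every $\alpha$, $$(x\oplus_{u,1}(y\oplus_{v,w}z))_{s,t}^{(\alpha)}=\mathrm{e}(z\mathrm{T}_{v^{-1}}\mathbf{D}_{s,t},w)\big\{(x\oplus_{u,v}y)_{s,t}^{(\alpha)}\big\},$$ where on the right the operator acts termwise on the variable $y$ and the identity is one of formal series.
   Context: Let $s,t$ be nonzero reals with $s^2+4t\neq0$, $\varphi=\frac{s+\sqrt{s^2+4t}}{2}$, $\varphi'=\frac{s-\sqrt{s^2+4t}}{2}$, $\{\beta\}_{s,t}=\frac{\varphi^\beta-\varphi'^\beta}{\varphi-\varphi'}$, $\{n\}_{s,t}!=\{1\}_{s,t}\cdots\{n\}_{s,t}$ ($\{0\}_{s,t}!=1$), $\left\{{\alpha\atop k}\right\}_{s,t}=\frac{\{\alpha\}_{s,t}\cdots\{\alpha-k+1\}_{s,t}}{\{k\}_{s,t}!}$, $\binom{\beta}{2}=\beta(\beta-1)/2$. The deformed binomial series is $(x\oplus_{u,v}y)_{s,t}^{(\alpha)}=\sum_{n\geq0}\left\{{\alpha\atop n}\right\}_{s,t}u^{\binom{\alpha-n}{2}}v^{\binom{n}{2}}x^{\alpha-n}y^n$ (a polynomial when $\alpha\in\mathbb N$). The deformed trinomial series is $(x\oplus_{u,1}(y\oplus_{v,w}z))_{s,t}^{(\alpha)}=\sum_{k\ge0}\left\{{\alpha\atop k}\right\}_{s,t}u^{\binom{\alpha-k}{2}}x^{\alpha-k}(y\oplus_{v,w}z)_{s,t}^{(k)}$. The $(s,t)$-derivative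 acts on powers of $y$ by $\mathbf{D}_{s,t}y^m=\{m\}_{s,t}y^{m-1}$, $\mathrm{T}_af(y)=f(ay)$, and $\mathrm{e}(z\mathrm{T}_{v^{-1}}\mathbf{D}_{s,t},w)=\sum_{n\ge0}w^{\binom{n}{2}}\frac{z^n}{\{n\}_{s,t}!}(\mathrm{T}_{v^{-1}}\mathbf{D}_{s,t})^n$. *)

theory Defs
  imports "HOL-Analysis.Analysis"
begin

definition gpow :: "complex \<Rightarrow> real \<Rightarrow> complex" where
  "gpow a b = (if b \<in> \<int> then a powi \<lfloor>b\<rfloor> else a powr complex_of_real b)"

definition binom2 :: "real \<Rightarrow> real" where
  "binom2 b = b * (b - 1) / 2"

definition phi :: "real \<Rightarrow> real \<Rightarrow> complex" where
  "phi s t = (complex_of_real s + csqrt (complex_of_real (s\<^sup>2 + 4 * t))) / 2"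

definition phi' :: "real \<Rightarrow> real \<Rightarrow> complex" where
  "phi' s t = (complex_of_real s - csqrt (complex_of_real (s\<^sup>2 + 4 * t))) / 2"

definition qnum :: "real \<Rightarrow> real \<Rightarrow> real \<Rightarrow> complex" where
  "qnum s t b = (gpow (phi s t) b - gpow (phi' s t) b) / (phi s t - phi' s t)"

definition qfact :: "real \<Rightarrow> real \<Rightarrow> nat \<Rightarrow> complex" where
  "qfact s t n = (\<Prod>i=1..n. qnum s t (real i))"

definition qbinom :: "real \<Rightarrow> real \<Rightarrow> real \<Rightarrow> nat \<Rightarrow> complex" where
  "qbinom s t a k = (\<Prod>i<k. qnum s t (a - real i)) / qfact s t k"

text \<open>Formal series in x, y, z: S m i j is the coefficient of x^(alpha - m) y^i z^j
  (alpha being the fixed exponent of the statement).\<close>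
type_synonym ser = "nat \<Rightarrow> nat \<Rightarrow> nat \<Rightarrow> complex"

text \<open>Polynomials in y, z: P i j is the coefficient of y^i z^j.\<close>
type_synonym poly2 = "nat \<Rightarrow> nat \<Rightarrow> complex"

definition fsum :: "(nat \<Rightarrow> ser) \<Rightarrow> ser" where
  "fsum F = (\<lambda>m i j. \<Sum>n. F n m i j)"

definition mono :: "nat \<Rightarrow> nat \<Rightarrow> nat \<Rightarrow> complex \<Rightarrow> ser" where
  "mono m i j c = (\<lambda>m' i' j'. if m' = m \<and> i' = i \<and> j' = j then c else 0)"

definition xmul :: "nat \<Rightarrow> complex \<Rightarrow> poly2 \<Rightarrow> ser" where
  "xmul k c P = (\<lambda>m i j. if m = k then c * P i j else 0)"

text \<open>The deformed binomial (y (+)_{v,w} z)^(k)_{s,t} for natural k (a polynomial).\<close>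
definition dbinom_nat :: "real \<Rightarrow> real \<Rightarrow> complex \<Rightarrow> complex \<Rightarrow> nat \<Rightarrow> poly2" where
  "dbinom_nat s t v w k = (\<lambda>i j. \<Sum>n\<in>{0..k}.
      if i = k - n \<and> j = n then
        qbinom s t (real k) n * gpow v (binom2 (real k - real n)) * gpow w (binom2 (real n))
      else 0)"

text \<open>The deformed binomial series (x (+)_{u,v} y)^(alpha)_{s,t}.\<close>
definition dbinom :: "real \<Rightarrow> real \<Rightarrow> complex \<Rightarrow> complex \<Rightarrow> real \<Rightarrow> ser" where
  "dbinom s t u v a = fsum (\<lambda>n. mono n n 0
      (qbinom s t a n * gpow u (binom2 (a - real n)) * gpow v (binom2 (real n))))"

text \<open>The deformed trinomial series (x (+)_{u,1} (y (+)_{v,w} z))^(alpha)_{s,t}.\<close>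
definition dtrinom :: "real \<Rightarrow> real \<Rightarrow> complex \<Rightarrow> complex \<Rightarrow> complex \<Rightarrow> real \<Rightarrow> ser" where
  "dtrinom s t u v w a = fsum (\<lambda>k. xmul k
      (qbinom s t a k * gpow u (binom2 (a - real k))) (dbinom_nat s t v w k))"

text \<open>The operator T_{v^{-1}} D_{s,t} acting termwise on y:
  y^(i+1) \<mapsto> {i+1}_{s,t} (y/v)^i.\<close>
definition TD :: "real \<Rightarrow> real \<Rightarrow> complex \<Rightarrow> ser \<Rightarrow> ser" where
  "TD s t v S = (\<lambda>m i j. qnum s t (real (Suc i)) * inverse v ^ i * S m (Suc i) j)"

definition zmul :: "nat \<Rightarrow> complex \<Rightarrow> ser \<Rightarrow> ser" where
  "zmul n c S = (\<lambda>m i j. if n \<le> j then c * S m i (j - n) else 0)"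

text \<open>The operator e(z T_{v^{-1}} D_{s,t}, w) applied to a series.\<close>
definition eop :: "real \<Rightarrow> real \<Rightarrow> complex \<Rightarrow> complex \<Rightarrow> ser \<Rightarrow> ser" where
  "eop s t v w S = fsum (\<lambda>n. zmul n (gpow w (binom2 (real n)) / qfact s t n)
      ((TD s t v ^^ n) S))"

end

theory Submission
  imports Defs
begin

text \<open>Both sides are compared coefficientwise. The coefficient of x^(alpha-m) y^i z^j vanishes
  on both sides unless i + j = m. On the right only the summand n = j of the exponential operator
  contributes: applying (T_{v^-1} D_{s,t})^j to y^m produces {m}_{s,t} ... {i+1}_{s,t} y^i, which
  together with 1/{j}_{s,t}! is the binomial {m choose j}_{s,t}, and the power
  v^(-(i + ... + (i+j-1))) turns v^(m choose 2) into v^(i choose 2), because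
  (i+j choose 2) = (i choose 2) + (j choose 2) + i j.\<close>

lemma suminf_if_eq: "(\<Sum>n. if n = k then c else 0) = (c::complex)"
  using sums_single[of k "\<lambda>_. c"] sums_unique by metis

lemma binom2_of_nat: "binom2 (real k) = real (k choose 2)"
proof -
  have "real (k * (k - 1)) = real k * (real k - 1)"
    by (cases k) (auto simp: algebra_simps)
  moreover have "even (k * (k - 1))"
    by auto
  ultimately show ?thesis
    unfolding binom2_def choose_two by (simp only: real_of_nat_div)
qed

lemma gpow_of_nat: "gpow v (real k) = v ^ k"
  unfolding gpow_def by simp

lemma gpow_binom2_of_nat: "gpow v (binom2 (real k)) = v ^ (k choose 2)"
  by (simp only: binom2_of_nat gpow_of_nat)

lemma choose_two_add: "(i + j) choose 2 = (i choose 2) + (j choose 2) + i * j"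
proof -
  have "(i + j) * (i + j - 1) = i * (i - 1) + j * (j - 1) + 2 * (i * j)"
    by (cases i; cases j) (auto simp: algebra_simps)
  moreover have "even (k * (k - 1))" for k :: nat
    by auto
  ultimately show ?thesis
    by (auto simp: choose_two)
qed

lemma sum_lessThan_add_choose_two: "(\<Sum>l<j. i + l) = i * j + (j choose 2)"
  by (induction j) (simp_all add: numeral_2_eq_2)

lemma power_inverse_choose_two_add:
  fixes v :: "'a::field"
  assumes "v \<noteq> 0"
  shows "inverse v ^ (i * j + (j choose 2)) * v ^ ((i + j) choose 2) = v ^ (i choose 2)"
  using assms by (simp add: choose_two_add power_add power_inverse field_simps)

lemma qbinom_of_nat_add:
  "qbinom s t (real (i + j)) j = (\<Prod>l<j. qnum s t (real (i + l + 1))) / qfact s t j"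
proof -
  have "(\<Prod>l<j. qnum s t (real (i + j) - real l))
      = (\<Prod>l<j. qnum s t (real (i + j) - real (j - 1 - l)))"
    by (rule prod.reindex_bij_witness[where i="\<lambda>l. j - 1 - l" and j="\<lambda>l. j - 1 - l"]) auto
  also have "\<dots> = (\<Prod>l<j. qnum s t (real (i + l + 1)))"
    by (rule prod.cong) (auto simp: of_nat_diff algebra_simps)
  finally show ?thesis
    unfolding qbinom_def by simp
qed

lemma dbinom_coeff:
  "dbinom s t u v a m i j =
    (if i = m \<and> j = 0
     then qbinom s t a m * gpow u (binom2 (a - real m)) * gpow v (binom2 (real m)) else 0)"
  unfolding dbinom_def fsum_def mono_def
  by (subst suminf_if_eq[symmetric]) (rule arg_cong[where f = suminf], auto)

lemma dbinom_nat_coeff: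
  "dbinom_nat s t v w k i j =
    (if i + j = k then qbinom s t (real k) j * v ^ (i choose 2) * w ^ (j choose 2) else 0)"
proof (cases "i + j = k")
  case True
  then have "dbinom_nat s t v w k i j
      = (\<Sum>n\<in>{0..k}. if n = j then qbinom s t (real k) n * gpow v (binom2 (real i))
                                    * gpow w (binom2 (real n)) else 0)"
    unfolding dbinom_nat_def by (intro sum.cong) auto
  with True show ?thesis
    by (simp add: gpow_binom2_of_nat)
next
  case False
  then show ?thesis
    unfolding dbinom_nat_def by (intro trans[OF sum.neutral]) auto
qed

lemma dtrinom_coeff:
  "dtrinom s t u v w a m i j =
    qbinom s t a m * gpow u (binom2 (a - real m)) * dbinom_nat s t v w m i j"
  unfolding dtrinom_def fsum_def xmul_def
  by (subst suminf_if_eq[symmetric]) (rule arg_cong[where f = suminf], auto)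

lemma TD_funpow:
  "(TD s t v ^^ n) S m i j =
    (\<Prod>l<n. qnum s t (real (i + l + 1)) * inverse v ^ (i + l)) * S m (i + n) j"
proof (induction n arbitrary: i)
  case 0
  then show ?case by simp
next
  case (Suc n)
  have "(TD s t v ^^ Suc n) S m i j
      = qnum s t (real (Suc i)) * inverse v ^ i * (TD s t v ^^ n) S m (Suc i) j"
    by (simp add: TD_def)
  then show ?case
    by (simp add: Suc.IH prod.lessThan_Suc_shift del: prod.lessThan_Suc)
qed

lemma eop_coeff_z_free:
  assumes "\<And>m i j. j \<noteq> 0 \<Longrightarrow> S m i j = 0"
  shows "eop s t v w S m i j = w ^ (j choose 2) / qfact s t j * (TD s t v ^^ j) S m i 0"
proof -
  have "(TD s t v ^^ n) S m i (j - n) = 0" if "n < j" for n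
    using that assms by (simp add: TD_funpow)
  then have "eop s t v w S m i j
      = (\<Sum>n. if n = j then w ^ (j choose 2) / qfact s t j * (TD s t v ^^ j) S m i 0 else 0)"
    unfolding eop_def fsum_def zmul_def
    by (intro arg_cong[where f = suminf] ext) (auto simp: gpow_binom2_of_nat)
  then show ?thesis
    by (simp only: suminf_if_eq)
qed

theorem mainTheorem6:
  fixes s t a :: real and u v w :: complex
  assumes "s \<noteq> 0" and "t \<noteq> 0" and "s\<^sup>2 + 4 * t \<noteq> 0" and "v \<noteq> 0"
  shows "dtrinom s t u v w a = eop s t v w (dbinom s t u v a)"
proof (intro ext)
  fix m i j
  let ?c = "qbinom s t a m * gpow u (binom2 (a - real m))"
  have rhs: "eop s t v w (dbinom s t u v a) m i j =
      (if i + j = m then w ^ (j choose 2) / qfact s t j * (\<Prod>l<j. qnum s t (real (i + l + 1)))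
         * (inverse v ^ (i * j + (j choose 2)) * v ^ (m choose 2)) * ?c else 0)"
    by (simp add: eop_coeff_z_free dbinom_coeff TD_funpow gpow_binom2_of_nat prod.distrib
                  power_sum[symmetric] sum_lessThan_add_choose_two)
  show "dtrinom s t u v w a m i j = eop s t v w (dbinom s t u v a) m i j"
  proof (cases "i + j = m")
    case True
    then have "qbinom s t (real m) j = (\<Prod>l<j. qnum s t (real (i + l + 1))) / qfact s t j"
      using qbinom_of_nat_add by blast
    with True show ?thesis
      unfolding rhs dtrinom_coeff dbinom_nat_coeff
      using power_inverse_choose_two_add[OF \<open>v \<noteq> 0\<close>, of i j] by simp
  next
    case False
    then show ?thesis
      unfolding rhs dtrinom_coeff dbinom_nat_coeff by simp
  qed
qed

end
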